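(* Let $n\ge1$, $k=\lfloor n/2\rfloor$, let $(p_j,u_j)$, $0\le j\le n$, be the coordinates of the trajectory $T_n$, and put $\lambda_j=1-u_j$. Then, with $\delta=1-(p_k-1)^2$, $$C_n=2\sum_{j=0}^{k-1}\bigl(3-p_j+u_j-2u_{j+1}-p_ju_j\bigr)+\delta=2\sum_{j=1}^{k}\frac{\lambda_j(\lambda_{j-1}-2\lambda_j)}{u_j}+\delta.$$
   Context: For $n\ge1$ and $\mathbf{x}=(x_1,\dots,x_n)\in(0,\infty)^n$ let $f_n(\mathbf{x})=\sum_{i=1}^n x_i+\sum_{1\le i\le j\le n}\prod_{k=i}^j \frac1{x_k}$, $A_n=\inf_{\mathbf{x}\in(0,\infty)^n} f_n(\mathbf{x})$, and $C_n=3n-A_n$. Let $\Phi$ be the partial map of $\mathbb{R}^2$ defined for $p\ne0$ by $\Phi(p,u)=\bigl(p^2(u+1)-1,\ 1/p\bigr)$. For $n\ge1$, the trajectory $T_n$ is the (existing and unique) finite sequence $(p_j,u_j)$, $j=0,\dots,n$, with $(p_j,u_j)=\Phi(p_{j-1},u_{j-1})$ for $1\le j\le n$, $u_0=0$, $p_n=0$, and $p_j>0$ for $0\le j\le n-1$. *)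

theory Defs
  imports Complex_Main
begin

text \<open>Vectors in (0,inf)^n are functions nat => real, with coordinates x 1, ..., x n.\<close>

definition f_fun :: "nat \<Rightarrow> (nat \<Rightarrow> real) \<Rightarrow> real" where
  "f_fun n x = (\<Sum>i=1..n. x i) + (\<Sum>i=1..n. \<Sum>j=i..n. \<Prod>k=i..j. 1 / x k)"

definition A_val :: "nat \<Rightarrow> real" where
  "A_val n = Inf {f_fun n x | x. \<forall>i\<in>{1..n}. x i > 0}"

definition C_val :: "nat \<Rightarrow> real" where
  "C_val n = 3 * real n - A_val n"

definition Phi :: "real \<times> real \<Rightarrow> real \<times> real" where
  "Phi = (\<lambda>(p, u). (p^2 * (u + 1) - 1, 1 / p))"

definition is_trajectory :: "nat \<Rightarrow> (nat \<Rightarrow> real) \<Rightarrow> (nat \<Rightarrow> real) \<Rightarrow> bool" where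
  "is_trajectory n p u \<longleftrightarrow>
     u 0 = 0 \<and> p n = 0 \<and> (\<forall>j<n. p j > 0) \<and>
     (\<forall>j\<in>{1..n}. (p j, u j) = Phi (p (j - 1), u (j - 1)))"

end

theory Submission
  imports Defs
begin

text \<open>
  Put x k = p (k - 1) * (1 + u (k - 1)). The trajectory recursion makes the interval products
  \<Prod>l=i..j. 1 / x l sum to u j over i and to p (i - 1) over j, and those covering a fixed
  index k sum to x k. The last fact is the stationarity of f n in the coordinates ln (x l), in
  which f n is a sum of exponentials of linear forms; the tangent inequality exp t \<ge> 1 + t
  turns it into global minimality of x, with uniqueness. Evaluating f n at x gives
  C n = \<Sum>j<n. 3 - 2 p j - p j u j. The map (p j, u j) \<mapsto> (u (n - j), p (n - j)) sends
  trajectories to trajectories, so uniqueness of the minimiser gives the symmetry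
  p j = u (n - j). Folding the sum at k = n div 2 with this symmetry and telescoping with
  p (j + 1) u (j + 1) = p j + p j u j - u (j + 1) gives the formula.
\<close>

definition inv_prod :: "(nat \<Rightarrow> real) \<Rightarrow> nat \<Rightarrow> nat \<Rightarrow> real" where
  "inv_prod x i j = (\<Prod>k=i..j. 1 / x k)"

lemma f_fun_inv_prod: "f_fun n x = (\<Sum>i=1..n. x i) + (\<Sum>i=1..n. \<Sum>j=i..n. inv_prod x i j)"
  by (simp add: f_fun_def inv_prod_def)

lemma inv_prod_split:
  assumes "i \<le> Suc m" "m \<le> j"
  shows "inv_prod x i j = inv_prod x i m * inv_prod x (Suc m) j"
proof -
  have "{i..j} = {i..m} \<union> {Suc m..j}" "{i..m} \<inter> {Suc m..j} = {}" using assms by auto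
  then show ?thesis unfolding inv_prod_def by (simp add: prod.union_disjoint)
qed

lemma tangent_gap_ln_nonneg:
  fixes x z :: real
  assumes "0 < x" "0 < z"
  shows "0 \<le> x - z - z * ln (x / z)"
  using assms ln_le_minus_one[of "x / z"] by (simp add: field_simps)

lemma tangent_gap_ln_pos:
  fixes x z :: real
  assumes "0 < x" "0 < z" "x \<noteq> z"
  shows "0 < x - z - z * ln (x / z)"
proof -
  have "ln (x / z) \<noteq> x / z - 1" using ln_eq_minus_one[of "x / z"] assms by auto
  then have "ln (x / z) < x / z - 1" using ln_le_minus_one[of "x / z"] assms by simp
  then show ?thesis using assms(2) by (simp add: field_simps)
qed

lemma prod_inverse_ge_tangent:
  fixes x z :: "'a \<Rightarrow> real"
  assumes "finite A" "\<And>k. k \<in> A \<Longrightarrow> x k > 0" "\<And>k. k \<in> A \<Longrightarrow> z k > 0"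
  shows "(\<Prod>k\<in>A. 1 / z k) * (1 - (\<Sum>k\<in>A. ln (x k / z k))) \<le> (\<Prod>k\<in>A. 1 / x k)"
proof -
  define s where "s = (\<Sum>k\<in>A. ln (x k / z k))"
  have "(\<Prod>k\<in>A. 1 / z k) * (1 - s) \<le> (\<Prod>k\<in>A. 1 / z k) * exp (- s)"
    using exp_ge_add_one_self[of "- s"] assms(3)
    by (intro mult_left_mono prod_nonneg) (auto intro: less_imp_le)
  also have "\<dots> = (\<Prod>k\<in>A. 1 / z k * exp (- ln (x k / z k)))"
    unfolding s_def using assms(1) by (simp only: prod.distrib exp_sum flip: sum_negf)
  also have "\<dots> = (\<Prod>k\<in>A. 1 / x k)"
    using assms(2,3) by (intro prod.cong) (force simp: exp_minus)+
  finally show ?thesis unfolding s_def .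
qed

lemma sum_triangle_swap:
  fixes h :: "nat \<Rightarrow> nat \<Rightarrow> 'a::comm_monoid_add"
  shows "(\<Sum>i=a..n. \<Sum>j=i..n. h i j) = (\<Sum>j=a..n. \<Sum>i=a..j. h i j)"
proof -
  have "(\<Sum>i=a..n. \<Sum>j=i..n. h i j) = (\<Sum>i=a..n. \<Sum>j\<in>{j. j \<in> {a..n} \<and> i \<le> j}. h i j)"
    by (intro sum.cong) auto
  also have "\<dots> = (\<Sum>j=a..n. \<Sum>i\<in>{i. i \<in> {a..n} \<and> i \<le> j}. h i j)"
    by (rule sum.swap_restrict) auto
  also have "\<dots> = (\<Sum>j=a..n. \<Sum>i=a..j. h i j)"
    by (intro sum.cong) auto
  finally show ?thesis .
qed

lemma sum_intervals_exchange:
  fixes g :: "nat \<Rightarrow> nat \<Rightarrow> 'a::comm_semiring_0"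
  shows "(\<Sum>i=1..n. \<Sum>j=i..n. g i j * (\<Sum>k=i..j. y k))
       = (\<Sum>k=1..n. y k * (\<Sum>i=1..k. \<Sum>j=k..n. g i j))"
proof -
  have "(\<Sum>i=1..n. \<Sum>j=i..n. g i j * (\<Sum>k=i..j. y k)) = (\<Sum>i=1..n. \<Sum>k=i..n. \<Sum>j=k..n. g i j * y k)"
    by (simp add: sum_distrib_left sum_triangle_swap)
  also have "\<dots> = (\<Sum>k=1..n. \<Sum>i=1..k. \<Sum>j=k..n. g i j * y k)"
    by (rule sum_triangle_swap)
  finally show ?thesis by (simp add: sum_distrib_left sum_distrib_right mult.commute)
qed

lemma sum_top_reverse:
  fixes f :: "nat \<Rightarrow> 'a::comm_monoid_add"
  assumes "k \<le> n"
  shows "(\<Sum>j=n-k..<n. f j) = (\<Sum>i<k. f (n - Suc i))"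
  by (rule sum.reindex_bij_witness[of _ "\<lambda>i. n - Suc i" "\<lambda>j. n - Suc j"]) (use assms in auto)

locale trajectory =
  fixes n :: nat and p u :: "nat \<Rightarrow> real"
  assumes is_trajectory: "is_trajectory n p u"
begin

lemma u_0: "u 0 = 0" and p_n: "p n = 0" and p_pos: "j < n \<Longrightarrow> p j > 0"
  using is_trajectory by (auto simp: is_trajectory_def)

lemma
  assumes "j < n"
  shows u_Suc: "u (Suc j) = 1 / p j" and p_Suc: "p (Suc j) = p j ^ 2 * (u j + 1) - 1"
proof -
  have "(p (Suc j), u (Suc j)) = Phi (p j, u j)"
    using is_trajectory assms unfolding is_trajectory_def by fastforce
  then show "u (Suc j) = 1 / p j" "p (Suc j) = p j ^ 2 * (u j + 1) - 1"
    by (auto simp: Phi_def)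
qed

lemma u_pos: "1 \<le> j \<Longrightarrow> j \<le> n \<Longrightarrow> u j > 0"
  by (cases j) (auto simp: u_Suc p_pos)

lemma u_nonneg: "j \<le> n \<Longrightarrow> u j \<ge> 0"
  using u_pos[of j] by (cases "j = 0") (auto simp: u_0)

lemma p_mult_u_Suc:
  assumes "j < n"
  shows "p j * u (Suc j) = 1"
  using p_pos[OF assms] by (simp add: u_Suc[OF assms])

lemma Phi_backward:
  assumes "j < n"
  shows "Phi (u (Suc j), p (Suc j)) = (u j, p j)"
  using assms p_pos[OF assms] by (simp add: Phi_def u_Suc p_Suc power2_eq_square field_simps)

lemma reverse: "trajectory n (\<lambda>j. u (n - j)) (\<lambda>j. p (n - j))"
proof
  have "Phi (u (n - (j - 1)), p (n - (j - 1))) = (u (n - j), p (n - j))" if "j \<in> {1..n}" for j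
  proof -
    have "n - (j - 1) = Suc (n - j)" using that by auto
    then show ?thesis using Phi_backward[of "n - j"] that by simp
  qed
  then show "is_trajectory n (\<lambda>j. u (n - j)) (\<lambda>j. p (n - j))"
    unfolding is_trajectory_def by (simp add: u_0 p_n u_pos)
qed

definition minimizer :: "nat \<Rightarrow> real" where
  "minimizer k = p (k - 1) * (1 + u (k - 1))"

lemma minimizer_pos:
  assumes "k \<in> {1..n}"
  shows "minimizer k > 0"
  using assms p_pos[of "k - 1"] u_nonneg[of "k - 1"]
  by (auto simp: minimizer_def intro!: mult_pos_pos add_pos_nonneg)

lemma u_Suc_minimizer: "j < n \<Longrightarrow> u (Suc j) = (1 + u j) / minimizer (Suc j)"
  using u_nonneg[of j] by (simp add: minimizer_def u_Suc add_nonneg_pos)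

lemma sum_inv_prod_ending: "j \<le> n \<Longrightarrow> (\<Sum>i=1..j. inv_prod minimizer i j) = u j"
proof (induction j)
  case 0
  then show ?case by (simp add: u_0)
next
  case (Suc j)
  have "(\<Sum>i=1..Suc j. inv_prod minimizer i (Suc j))
      = ((\<Sum>i=1..j. inv_prod minimizer i j) + 1) / minimizer (Suc j)"
    by (simp add: inv_prod_def add_divide_distrib flip: sum_divide_distrib)
  also have "\<dots> = u (Suc j)"
    using Suc by (simp add: u_Suc_minimizer add.commute)
  finally show ?case .
qed

lemma sum_inv_prod_starting: "m \<le> n \<Longrightarrow> (\<Sum>j=Suc m..n. inv_prod minimizer (Suc m) j) = p m"
proof (induction m rule: inc_induct)
  case base
  then show ?case by (simp add: p_n)
next
  case (step m)
  have "(\<Sum>j=Suc m..n. inv_prod minimizer (Suc m) j)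
      = (1 + (\<Sum>j=Suc (Suc m)..n. inv_prod minimizer (Suc (Suc m)) j)) / minimizer (Suc m)"
    using step.hyps inv_prod_split[of "Suc m" "Suc m" _ minimizer]
    by (simp add: sum.atLeast_Suc_atMost inv_prod_def add_divide_distrib sum_divide_distrib)
  also have "\<dots> = (1 + p (Suc m)) / (p m * (1 + u m))"
    using step.IH by (simp add: minimizer_def[of "Suc m"])
  also have "\<dots> = p m"
  proof -
    have "p m * (1 + u m) > 0"
      using step.hyps p_pos[of m] u_nonneg[of m] by (simp add: add_pos_nonneg)
    moreover have "1 + p (Suc m) = p m * (p m * (1 + u m))"
      using step.hyps by (simp add: p_Suc power2_eq_square algebra_simps)
    ultimately show ?thesis by (metis nonzero_mult_div_cancel_right less_irrefl)
  qed
  finally show ?case .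
qed

lemma sum_inv_prod_covering:
  assumes k: "k \<in> {1..n}"
  shows "(\<Sum>i=1..k. \<Sum>j=k..n. inv_prod minimizer i j) = minimizer k"
proof -
  have tail: "(\<Sum>j=k..n. inv_prod minimizer (Suc k) j) = 1 + p k"
    using k sum_inv_prod_starting[of k] by (simp add: sum.atLeast_Suc_atMost inv_prod_def)
  have "(\<Sum>j=k..n. inv_prod minimizer i j) = inv_prod minimizer i k * (1 + p k)" if "i \<le> k" for i
  proof -
    have "(\<Sum>j=k..n. inv_prod minimizer i j)
        = (\<Sum>j=k..n. inv_prod minimizer i k * inv_prod minimizer (Suc k) j)"
      using that by (intro sum.cong refl inv_prod_split) auto
    then show ?thesis by (simp add: tail flip: sum_distrib_left)
  qed
  then have "(\<Sum>i=1..k. \<Sum>j=k..n. inv_prod minimizer i j) = u k * (1 + p k)"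
    using k sum_inv_prod_ending[of k] by (simp flip: sum_distrib_right)
  also have "\<dots> = minimizer k"
  proof -
    obtain m where m: "k = Suc m" "m < n" using k by (cases k) auto
    have "u (Suc m) * (1 + p (Suc m)) = p m * (1 + u m)"
      using m(2) p_pos[of m] by (simp add: u_Suc p_Suc power2_eq_square)
    then show ?thesis by (simp add: m(1) minimizer_def)
  qed
  finally show ?thesis .
qed

lemma f_fun_ge_minimizer:
  assumes x: "\<And>k. k \<in> {1..n} \<Longrightarrow> x k > 0"
  shows "f_fun n minimizer + (\<Sum>k=1..n. x k - minimizer k - minimizer k * ln (x k / minimizer k))
      \<le> f_fun n x"
proof -
  define y where "y k = ln (x k / minimizer k)" for k
  have "(\<Sum>i=1..n. \<Sum>j=i..n. inv_prod minimizer i j * (1 - (\<Sum>k=i..j. y k)))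
      \<le> (\<Sum>i=1..n. \<Sum>j=i..n. inv_prod x i j)"
    unfolding y_def inv_prod_def using x minimizer_pos
    by (intro sum_mono prod_inverse_ge_tangent) auto
  moreover have "(\<Sum>i=1..n. \<Sum>j=i..n. inv_prod minimizer i j * (\<Sum>k=i..j. y k))
      = (\<Sum>k=1..n. y k * minimizer k)"
    unfolding sum_intervals_exchange by (rule sum.cong[OF refl]) (simp only: sum_inv_prod_covering)
  ultimately have "(\<Sum>i=1..n. \<Sum>j=i..n. inv_prod minimizer i j) - (\<Sum>k=1..n. y k * minimizer k)
      \<le> (\<Sum>i=1..n. \<Sum>j=i..n. inv_prod x i j)"
    by (simp add: right_diff_distrib sum_subtractf)
  moreover have "(\<Sum>k=1..n. x k - minimizer k - minimizer k * y k)
      = (\<Sum>k=1..n. x k) - (\<Sum>k=1..n. minimizer k) - (\<Sum>k=1..n. y k * minimizer k)"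
    by (simp add: sum_subtractf mult.commute)
  ultimately show ?thesis
    unfolding f_fun_inv_prod y_def[symmetric] by linarith
qed

lemma f_fun_minimizer_le:
  assumes "\<And>k. k \<in> {1..n} \<Longrightarrow> x k > 0"
  shows "f_fun n minimizer \<le> f_fun n x"
proof -
  have "0 \<le> (\<Sum>k=1..n. x k - minimizer k - minimizer k * ln (x k / minimizer k))"
    using assms minimizer_pos by (intro sum_nonneg tangent_gap_ln_nonneg) auto
  then show ?thesis using f_fun_ge_minimizer[of x, OF assms] by linarith
qed

lemma minimizer_unique:
  assumes x: "\<And>k. k \<in> {1..n} \<Longrightarrow> x k > 0" and le: "f_fun n x \<le> f_fun n minimizer"
    and k: "k \<in> {1..n}"
  shows "x k = minimizer k"
proof (rule ccontr)
  let ?gap = "\<lambda>k. x k - minimizer k - minimizer k * ln (x k / minimizer k)"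
  assume "x k \<noteq> minimizer k"
  then have "0 < ?gap k"
    by (intro tangent_gap_ln_pos x[OF k] minimizer_pos[OF k])
  also have "\<dots> \<le> (\<Sum>k=1..n. ?gap k)"
    using k x minimizer_pos by (intro member_le_sum tangent_gap_ln_nonneg) auto
  finally show False using f_fun_ge_minimizer[of x, OF x] le by linarith
qed

lemma A_val_eq: "A_val n = f_fun n minimizer"
  unfolding A_val_def
proof (rule cInf_eq_minimum)
  show "f_fun n minimizer \<in> {f_fun n x |x. \<forall>i\<in>{1..n}. 0 < x i}"
    using minimizer_pos by blast
next
  fix v
  assume "v \<in> {f_fun n x |x. \<forall>i\<in>{1..n}. 0 < x i}"
  then obtain x where "v = f_fun n x" "\<And>i. i \<in> {1..n} \<Longrightarrow> 0 < x i" by blast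
  then show "f_fun n minimizer \<le> v" using f_fun_minimizer_le[of x] by blast
qed

definition C_term :: "nat \<Rightarrow> real" where
  "C_term j = 3 - 2 * p j - p j * u j"

lemma C_val_eq: "C_val n = (\<Sum>j<n. C_term j)"
proof -
  have "(\<Sum>i=1..n. \<Sum>j=i..n. inv_prod minimizer i j)
      = (\<Sum>i<n. \<Sum>j=Suc i..n. inv_prod minimizer (Suc i) j)"
    by (simp add: sum.atLeast1_atMost_eq)
  also have "\<dots> = (\<Sum>j<n. p j)"
    using sum_inv_prod_starting by (intro sum.cong) auto
  moreover have "(\<Sum>i=1..n. minimizer i) = (\<Sum>j<n. p j + p j * u j)"
    by (simp add: sum.atLeast1_atMost_eq minimizer_def algebra_simps)
  ultimately have "A_val n = (\<Sum>j<n. 2 * p j + p j * u j)"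
    by (simp add: A_val_eq f_fun_inv_prod sum.distrib sum_distrib_left)
  moreover have "(\<Sum>j<n. C_term j) = (\<Sum>j<n. 3) - (\<Sum>j<n. 2 * p j + p j * u j)"
    unfolding C_term_def sum_subtractf[symmetric] by (intro sum.cong) simp_all
  ultimately show ?thesis
    by (simp add: C_val_def)
qed

lemma p_eq_u_reflect:
  assumes "j \<le> n"
  shows "p j = u (n - j)"
proof -
  interpret rev: trajectory n "\<lambda>j. u (n - j)" "\<lambda>j. p (n - j)"
    by (rule reverse)
  have same_minimizer: "rev.minimizer k = minimizer k" if "k \<in> {1..n}" for k
    using minimizer_unique[of rev.minimizer] rev.minimizer_pos
      rev.f_fun_minimizer_le[of minimizer] minimizer_pos that by blast
  have "p (n - i) = u i" if "i \<le> n" for i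
    using that
  proof (induction i)
    case 0
    then show ?case by (simp add: p_n u_0)
  next
    case (Suc i)
    then show ?case
      using u_Suc_minimizer[of i] rev.u_Suc_minimizer[of i] same_minimizer[of "Suc i"] by simp
  qed
  then show ?thesis using assms by (metis diff_diff_cancel diff_le_self)
qed

lemma p_Suc_mult_u_Suc:
  assumes "j < n"
  shows "p (Suc j) * u (Suc j) = p j + p j * u j - u (Suc j)"
  using p_pos[OF assms] by (simp add: u_Suc[OF assms] p_Suc[OF assms] power2_eq_square field_simps)

lemma sum_p_minus_u_Suc: "k \<le> n \<Longrightarrow> (\<Sum>j<k. p j - u (Suc j)) = p k * u k"
  by (induction k) (simp_all add: u_0 p_Suc_mult_u_Suc)

lemma C_term_reflect:
  assumes "i < n"
  shows "C_term (n - Suc i) = C_term i + (p i - u (Suc i))"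
proof -
  have "p (n - Suc i) = u (Suc i)" "u (n - Suc i) = p (Suc i)"
    using assms p_eq_u_reflect[of "n - Suc i"] p_eq_u_reflect[of "Suc i"]
    by (simp_all add: Suc_diff_Suc)
  then show ?thesis
    using p_Suc_mult_u_Suc[OF assms] by (simp add: C_term_def algebra_simps)
qed

lemma sum_C_term_top:
  assumes "k \<le> n"
  shows "(\<Sum>j=n-k..<n. C_term j) = (\<Sum>j<k. C_term j) + p k * u k"
proof -
  have "(\<Sum>j=n-k..<n. C_term j) = (\<Sum>i<k. C_term i + (p i - u (Suc i)))"
    unfolding sum_top_reverse[OF assms] using assms by (intro sum.cong) (auto simp: C_term_reflect)
  then show ?thesis
    using sum_p_minus_u_Suc[OF assms] by (simp add: sum.distrib)
qed

lemma sum_summand_eq_sum_C_term: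
  assumes "k \<le> n"
  shows "(\<Sum>j<k. 3 - p j + u j - 2 * u (j + 1) - p j * u j)
       = (\<Sum>j<k. C_term j) + p k * u k - u k"
proof -
  have "(\<Sum>j<k. 3 - p j + u j - 2 * u (j + 1) - p j * u j)
      = (\<Sum>j<k. C_term j) + (\<Sum>j<k. p j - u (Suc j)) + (\<Sum>j<k. u j - u (Suc j))"
    by (simp add: C_term_def algebra_simps flip: sum.distrib)
  then show ?thesis
    using sum_p_minus_u_Suc[OF assms] by (simp add: sum_lessThan_telescope' u_0)
qed

lemma p_middle_odd:
  assumes "odd n"
  shows "p (n div 2) = 1"
proof -
  let ?k = "n div 2"
  have "?k < n" "n - ?k = Suc ?k" using assms by presburger+
  then have "p ?k ^ 2 = 1" "p ?k > 0"
    using p_mult_u_Suc[of ?k] p_eq_u_reflect[of ?k] p_pos[of ?k]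
    by (simp_all add: power2_eq_square)
  then show ?thesis by (auto simp: power2_eq_1_iff)
qed

lemma C_val_half_sum:
  defines "k \<equiv> n div 2"
  shows "C_val n = 2 * (\<Sum>j<k. 3 - p j + u j - 2 * u (j + 1) - p j * u j) + (1 - (p k - 1)^2)"
proof -
  have kn: "k \<le> n" unfolding k_def by simp
  have halves: "C_val n = (\<Sum>j<k. C_term j) + (\<Sum>j=k..<n. C_term j)"
    using sum.atLeastLessThan_concat[of 0 k n C_term] kn by (simp add: C_val_eq atLeast0LessThan)
  show ?thesis
  proof (cases "even n")
    case True
    then have "n - k = k" unfolding k_def by auto
    then have "p k = u k" "C_val n = 2 * (\<Sum>j<k. C_term j) + p k * u k"
      using p_eq_u_reflect[OF kn] halves sum_C_term_top[OF kn] by simp_all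
    then show ?thesis
      using sum_summand_eq_sum_C_term[OF kn] by (simp add: power2_eq_square algebra_simps)
  next
    case False
    then have "n - k = Suc k" unfolding k_def by presburger
    then have "C_val n = 2 * (\<Sum>j<k. C_term j) + C_term k + p k * u k"
      using halves sum_C_term_top[OF kn] by (simp add: sum.atLeast_Suc_lessThan)
    moreover have "p k = 1"
      using p_middle_odd False unfolding k_def by simp
    ultimately show ?thesis
      using sum_summand_eq_sum_C_term[OF kn] by (simp add: C_term_def algebra_simps)
  qed
qed

lemma lambda_summand_eq:
  assumes "j < n"
  shows "(1 - u (Suc j)) * ((1 - u j) - 2 * (1 - u (Suc j))) / u (Suc j)
       = 3 - p j + u j - 2 * u (j + 1) - p j * u j"
proof -
  have "u (Suc j) > 0" "p j = 1 / u (Suc j)"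
    using assms u_pos[of "Suc j"] p_mult_u_Suc[OF assms] by (simp_all add: eq_divide_eq)
  then show ?thesis by (simp add: field_simps)
qed

end

theorem lemma12:
  fixes n :: nat and p u :: "nat \<Rightarrow> real"
  assumes "n \<ge> 1"
    and "is_trajectory n p u"
  defines "k \<equiv> n div 2"
  defines "lam \<equiv> (\<lambda>j. 1 - u j)"
  defines "\<delta> \<equiv> 1 - (p k - 1)^2"
  shows "C_val n = 2 * (\<Sum>j<k. 3 - p j + u j - 2 * u (j + 1) - p j * u j) + \<delta>
       \<and> C_val n = 2 * (\<Sum>j=1..k. lam j * (lam (j - 1) - 2 * lam j) / u j) + \<delta>"
proof -
  interpret trajectory n p u
    by (rule trajectory.intro) (fact assms(2))
  have "(\<Sum>j=1..k. lam j * (lam (j - 1) - 2 * lam j) / u j)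
      = (\<Sum>j<k. lam (Suc j) * (lam j - 2 * lam (Suc j)) / u (Suc j))"
    by (simp add: sum.atLeast1_atMost_eq)
  also have "\<dots> = (\<Sum>j<k. 3 - p j + u j - 2 * u (j + 1) - p j * u j)"
    unfolding lam_def by (intro sum.cong refl lambda_summand_eq) (simp add: k_def)
  finally show ?thesis
    using C_val_half_sum unfolding k_def \<delta>_def by simp
qed

end
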